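(* Let $x$ be a real number with $\sin(2x)\neq 0$. Define $r_n(x)=\frac{(-1)^n x^{2n+1}}{(2n+1)!}$ for $n\ge 0$, $p_0(x)=q_0(x)=0$, and for $n\ge 1$ $$p_n(x)=p_{n-1}(x)+r_{n-1}(x),\qquad q_n(x)=q_{n-1}(x)+2^{2n-1}r_{n-1}(x).$$ Then $q_n(x)\neq 0$ for all sufficiently large $n$ and $$\tan(x)=\lim_{n\to\infty}\frac{2p_n^2(x)}{q_n(x)}.$$ *)

theory Defs
  imports Complex_Main
begin

definition tan_r :: "nat \<Rightarrow> real \<Rightarrow> real" where
  "tan_r n x = (-1) ^ n * x ^ (2 * n + 1) / fact (2 * n + 1)"

primrec tan_p :: "nat \<Rightarrow> real \<Rightarrow> real" where
  "tan_p 0 x = 0"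
| "tan_p (Suc n) x = tan_p n x + tan_r n x"

primrec tan_q :: "nat \<Rightarrow> real \<Rightarrow> real" where
  "tan_q 0 x = 0"
| "tan_q (Suc n) x = tan_q n x + 2 ^ (2 * Suc n - 1) * tan_r n x"

end

theory Submission
  imports Defs
begin

text \<open>The partial sums \<open>p\<^sub>n(x)\<close> of the sine series converge to \<open>sin x\<close>, and \<open>q\<^sub>n(x) = p\<^sub>n(2x)\<close>
  converges to \<open>sin (2x)\<close>; the limit \<open>2 sin\<^sup>2 x / sin (2x)\<close> equals \<open>tan x\<close> by the double-angle formula.\<close>

lemma tan_p_eq_sum: "tan_p n x = (\<Sum>k<n. (- 1) ^ k / fact (2 * k + 1) * x ^ (2 * k + 1))"
  by (induction n) (simp_all add: tan_r_def)

lemma tan_q_eq_tan_p_double: "tan_q n x = tan_p n (2 * x)"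
proof (induction n)
  case (Suc n)
  have "(2::real) ^ (2 * Suc n - 1) = 2 ^ (2 * n + 1)" by simp
  with Suc show ?case by (simp add: tan_r_def power_mult_distrib)
qed simp

lemma tan_p_tendsto_sin: "(\<lambda>n. tan_p n x) \<longlonglongrightarrow> sin x"
  using sin_paired[of x] unfolding sums_def tan_p_eq_sum .

lemma tan_eq_sin_square_div_sin_double:
  fixes x :: real
  assumes "sin (2 * x) \<noteq> 0"
  shows "tan x = 2 * (sin x)\<^sup>2 / sin (2 * x)"
proof -
  have "cos x \<noteq> 0" "sin x \<noteq> 0" using assms by (auto simp: sin_double)
  then show ?thesis unfolding sin_double by (simp add: tan_def power2_eq_square field_simps)
qed

theorem mainTheorem7:
  fixes x :: real
  assumes "sin (2 * x) \<noteq> 0"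
  shows "(\<forall>\<^sub>F n in sequentially. tan_q n x \<noteq> 0) \<and>
         ((\<lambda>n. 2 * (tan_p n x)\<^sup>2 / tan_q n x) \<longlonglongrightarrow> tan x)"
proof -
  have q: "(\<lambda>n. tan_q n x) \<longlonglongrightarrow> sin (2 * x)"
    unfolding tan_q_eq_tan_p_double by (rule tan_p_tendsto_sin)
  have "(\<lambda>n. 2 * (tan_p n x)\<^sup>2 / tan_q n x) \<longlonglongrightarrow> 2 * (sin x)\<^sup>2 / sin (2 * x)"
    by (intro tendsto_intros tan_p_tendsto_sin q assms)
  moreover have "\<forall>\<^sub>F n in sequentially. tan_q n x \<noteq> 0"
    using q assms by (rule tendsto_imp_eventually_ne)
  ultimately show ?thesis
    using tan_eq_sin_square_div_sin_double[OF assms] by simp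
qed

end
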